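(* The entropy of a runtime trace of a program compiled according to the principle that every machine code instruction that writes introduces maximal entropy is $32(n+m)$ bits, where $m$ is the number of input words and $n$ is the number of distinct arithmetic instructions that write in the trace, counted once only per set if they belong to a set of trailer instructions for the same location, and once each otherwise.
   Context: Setting (encrypted computing with chaotic compilation). A processor computes on encrypted 32-bit words. The compiler is stochastic: each compilation of the same source code produces machine code of identical structure and identical runtime trace structure, differing only in encrypted constants embedded in instructions. At each program point the compiler maintains an obfuscation scheme: for every register and memory location $l$, an offset $\Delta l\in\mathbb{Z}/2^{32}$ such that the plaintext stored in $l$ at runtime equals the nominal (programmer-intended) value plus $\Delta l$ (mod $2^{32}$). Every arithmetic instruction has an embedded encrypted constant that can be chosen to set the offset of the location it writes to any desired value. The trace $T$ is the runtime sequence of writes to registers and memory locations (viewed at the level of plaintext values beneath the encryption); it is a random variable over recompilations, and its entropy is $\mathrm{H}(T)=\mathbb{E}[-\log_2 f_T]$ where $f_T$ is its probability distribution. An input is a read in the trace of a location not previously written in the trace; its offset is specified by the scheme. The principle "every instruction that writes introduces maximal entropy" means each arithmetic instruction that writes chooses the new offset of its target location uniformly at random in $\mathbb{Z}/2^{32}$, independently of all other choices (input offsets likewise uniform and independent), except as forced by correctness: copy instructions preserve data exactly, and where two control paths join (ends of loops, after conditionals, subroutine returns, goto targets) the offset of each location must coincide on all joining paths. An instruction that adjusts the offset of a location $l$ to the final value common with a joining control path (the last write to $l$ before the join on its path) is a trailer instruction; trailer instructions for the same location at a join form a set sharing one common offset. Executing the same instruction again (or another instruction with an already-determined offset) adds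 no new choice. *)

theory Defs
  imports "HOL-Probability.Probability" "HOL-Library.Word"
begin

text \<open>Plaintext words beneath the encryption: 32-bit words, i.e. Z/2^32.\<close>
type_synonym w32 = "32 word"

text \<open>Events of a runtime trace (at the level of the program, i.e. independent of
the particular compilation):
  Rd l      : a read of location l (its plaintext value appears in the trace);
  Ar i l v  : arithmetic instruction i writes location l, nominal value v;
  Cp l l'   : copy instruction, copies the content of l' into l.\<close>
datatype ('l, 'i) event = Rd 'l | Ar 'i 'l w32 | Cp 'l 'l

fun ev_writes :: "('l, 'i) event \<Rightarrow> 'l set" where
  "ev_writes (Rd l) = {}"
| "ev_writes (Ar i l v) = {l}"
| "ev_writes (Cp l l') = {l}"

fun ev_reads :: "('l, 'i) event \<Rightarrow> 'l set" where
  "ev_reads (Rd l) = {l}"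
| "ev_reads (Ar i l v) = {}"
| "ev_reads (Cp l l') = {l'}"

definition inputs :: "('l, 'i) event list \<Rightarrow> 'l set" where
  "inputs es = {l. \<exists>k < length es. l \<in> ev_reads (es ! k) \<and>
                    (\<forall>j < k. l \<notin> ev_writes (es ! j))}"

definition arith_instrs :: "('l, 'i) event list \<Rightarrow> 'i set" where
  "arith_instrs es = {i. \<exists>l v. Ar i l v \<in> set es}"

text \<open>Trailer sets: a family of pairwise disjoint sets of instructions, each set
consisting of the trailer instructions for one location at one join.\<close>
definition choice_class :: "'i set set \<Rightarrow> 'i \<Rightarrow> 'i set" where
  "choice_class Tr i = (if \<exists>A\<in>Tr. i \<in> A then (THE A. A \<in> Tr \<and> i \<in> A) else {i})"

text \<open>The independent random choices of the obfuscation scheme: an offset for each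
input location (Inl l) and one offset per choice class of arithmetic instruction (Inr c).\<close>
definition choice_points :: "'i set set \<Rightarrow> ('l, 'i) event list \<Rightarrow> ('l + 'i set) set" where
  "choice_points Tr es = Inl ` inputs es \<union> Inr ` (choice_class Tr ` arith_instrs es)"

fun run :: "'i set set \<Rightarrow> (('l + 'i set) \<Rightarrow> w32) \<Rightarrow> ('l \<Rightarrow> w32) \<Rightarrow>
            ('l, 'i) event list \<Rightarrow> ('l \<times> w32) list" where
  "run Tr \<sigma> p [] = []"
| "run Tr \<sigma> p (Rd l # es) = (l, p l) # run Tr \<sigma> p es"
| "run Tr \<sigma> p (Ar i l v # es) =
     (let x = v + \<sigma> (Inr (choice_class Tr i)) in (l, x) # run Tr \<sigma> (p(l := x)) es)"
| "run Tr \<sigma> p (Cp l l' # es) = (l, p l') # run Tr \<sigma> (p(l := p l')) es"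

definition plain_trace :: "'i set set \<Rightarrow> ('l \<Rightarrow> w32) \<Rightarrow> ('l, 'i) event list \<Rightarrow>
                           (('l + 'i set) \<Rightarrow> w32) \<Rightarrow> ('l \<times> w32) list" where
  "plain_trace Tr init es \<sigma> = run Tr \<sigma> (\<lambda>l. init l + \<sigma> (Inl l)) es"

text \<open>Maximal entropy principle: all choices independent and uniform on Z/2^32.\<close>
definition offsets_pmf :: "'i set set \<Rightarrow> ('l, 'i) event list \<Rightarrow> (('l + 'i set) \<Rightarrow> w32) pmf" where
  "offsets_pmf Tr es = Pi_pmf (choice_points Tr es) 0 (\<lambda>_. pmf_of_set UNIV)"

text \<open>The trace as a random variable over recompilations.\<close>
definition trace_pmf :: "'i set set \<Rightarrow> ('l \<Rightarrow> w32) \<Rightarrow> ('l, 'i) event list \<Rightarrow> ('l \<times> w32) list pmf" where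
  "trace_pmf Tr init es = map_pmf (plain_trace Tr init es) (offsets_pmf Tr es)"

definition entropy_bits :: "'a pmf \<Rightarrow> real" where
  "entropy_bits P = (\<Sum>x\<in>set_pmf P. - pmf P x * log 2 (pmf P x))"

end

theory Submission
  imports Defs
begin

text \<open>Every random choice is visible in the trace: the first read of an input location
shows its initial value plus the input offset, and every arithmetic write shows its nominal
value plus the offset of its choice class. Hence the trace determines all offsets, the
trace map is injective on the support of the offset distribution, and the trace is uniform
over as many values as the offsets, namely (2^32)^|S| for S the set of choice points.\<close>

lemma length_run: "length (run Tr \<sigma> p es) = length es"
proof (induction es arbitrary: p)
  case (Cons e es) then show ?case by (cases e) (auto simp: Let_def)
qed simp

lemma nth_run_Ar:
  "k < length es \<Longrightarrow> es ! k = Ar i l v \<Longrightarrow>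
    run Tr \<sigma> p es ! k = (l, v + \<sigma> (Inr (choice_class Tr i)))"
proof (induction es arbitrary: p k)
  case (Cons e es) then show ?case by (cases e; cases k) (auto simp: Let_def)
qed simp

lemma snd_nth_run_unwritten:
  assumes "k < length es" "l \<in> ev_reads (es ! k)" "\<forall>j<k. l \<notin> ev_writes (es ! j)"
  shows "snd (run Tr \<sigma> p es ! k) = p l"
  using assms
proof (induction es arbitrary: p k)
  case (Cons e es)
  show ?case
  proof (cases k)
    case 0 then show ?thesis using Cons.prems by (cases e) auto
  next
    case (Suc k')
    have not_written: "l \<notin> ev_writes e" using Cons.prems(3) Suc by auto
    have "snd (run Tr \<sigma> q es ! k') = q l" for q
      using Cons.prems Suc by (intro Cons.IH) auto
    with not_written show ?thesis using Suc by (cases e) (auto simp: Let_def)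
  qed
qed simp

lemma finite_inputs: "finite (inputs es)"
proof -
  have "finite (ev_reads e)" for e :: "('l, 'i) event" by (cases e) auto
  moreover have "inputs es \<subseteq> \<Union> (ev_reads ` set es)"
    unfolding inputs_def by (auto intro: nth_mem)
  ultimately show ?thesis by (meson finite_UN_I finite_set finite_subset)
qed

lemma finite_arith_instrs: "finite (arith_instrs es)"
proof -
  have "arith_instrs es \<subseteq> (\<lambda>e. case e of Ar i l v \<Rightarrow> i) ` set es"
    unfolding arith_instrs_def by force
  then show ?thesis by (rule finite_subset) simp
qed

lemma finite_choice_points: "finite (choice_points Tr es)"
  unfolding choice_points_def using finite_inputs finite_arith_instrs by blast

lemma card_choice_points:
  fixes Tr :: "'i set set" and es :: "('l, 'i) event list"
  shows "card (choice_points Tr es) = card (choice_class Tr ` arith_instrs es) + card (inputs es)"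
proof -
  have "card (choice_points Tr es) =
      card (Inl ` inputs es :: ('l + 'i set) set) + card (Inr ` choice_class Tr ` arith_instrs es :: ('l + 'i set) set)"
    unfolding choice_points_def
    by (rule card_Un_disjoint) (auto intro: finite_inputs finite_arith_instrs)
  then show ?thesis by (simp add: card_image)
qed

lemma entropy_bits_pmf_of_set:
  assumes "finite X" "X \<noteq> {}"
  shows "entropy_bits (pmf_of_set X) = log 2 (card X)"
proof -
  have "entropy_bits (pmf_of_set X) = (\<Sum>x\<in>X. - (1 / card X) * log 2 (1 / card X))"
    unfolding entropy_bits_def using assms by (intro sum.cong) auto
  also have "\<dots> = log 2 (card X)" using assms by (simp add: log_divide)
  finally show ?thesis .
qed

lemma entropy_bits_map_pmf_inj:
  assumes "inj_on f (set_pmf P)"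
  shows "entropy_bits (map_pmf f P) = entropy_bits P"
  unfolding entropy_bits_def set_map_pmf using assms
  by (simp add: sum.reindex pmf_map_inj)

lemma offsets_pmf_eq_pmf_of_set:
  "offsets_pmf Tr es = pmf_of_set (PiE_dflt (choice_points Tr es) 0 (\<lambda>_. UNIV))"
  unfolding offsets_pmf_def by (rule Pi_pmf_of_set) (auto intro: finite_choice_points)

lemma set_pmf_offsets_pmf:
  "set_pmf (offsets_pmf Tr es) = PiE_dflt (choice_points Tr es) 0 (\<lambda>_. UNIV)"
  by (simp add: offsets_pmf_eq_pmf_of_set finite_PiE_dflt finite_choice_points)

lemma entropy_bits_offsets_pmf:
  "entropy_bits (offsets_pmf Tr es) = 32 * real (card (choice_points Tr es))"
proof -
  let ?\<Omega> = "PiE_dflt (choice_points Tr es) (0::w32) (\<lambda>_. UNIV)"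
  have "card ?\<Omega> = (2::nat) ^ (32 * card (choice_points Tr es))"
    by (simp add: card_PiE_dflt finite_choice_points card_word power_mult)
  moreover have "finite ?\<Omega>" "?\<Omega> \<noteq> {}"
    by (auto intro: finite_choice_points)
  ultimately show ?thesis
    by (simp add: offsets_pmf_eq_pmf_of_set entropy_bits_pmf_of_set log_nat_power)
qed

lemma plain_trace_determines_offset:
  assumes "x \<in> choice_points Tr es"
    and "plain_trace Tr init es \<sigma>\<^sub>1 = plain_trace Tr init es \<sigma>\<^sub>2"
  shows "\<sigma>\<^sub>1 x = \<sigma>\<^sub>2 x"
proof -
  from assms(1) consider (input) l where "l \<in> inputs es" "x = Inl l"
    | (arith) i where "i \<in> arith_instrs es" "x = Inr (choice_class Tr i)"
    unfolding choice_points_def by blast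
  then show ?thesis
  proof cases
    case input
    then obtain k where k: "k < length es" "l \<in> ev_reads (es ! k)"
      "\<forall>j<k. l \<notin> ev_writes (es ! j)" unfolding inputs_def by blast
    from assms(2) have "snd (plain_trace Tr init es \<sigma>\<^sub>1 ! k) = snd (plain_trace Tr init es \<sigma>\<^sub>2 ! k)"
      by simp
    then show ?thesis
      unfolding plain_trace_def using snd_nth_run_unwritten[OF k] input by simp
  next
    case arith
    then obtain l v where "Ar i l v \<in> set es" unfolding arith_instrs_def by blast
    then obtain k where k: "k < length es" "es ! k = Ar i l v" by (meson in_set_conv_nth)
    from assms(2) have "plain_trace Tr init es \<sigma>\<^sub>1 ! k = plain_trace Tr init es \<sigma>\<^sub>2 ! k"
      by simp
    then show ?thesis unfolding plain_trace_def using nth_run_Ar[OF k] arith by simp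
  qed
qed

lemma inj_on_plain_trace: "inj_on (plain_trace Tr init es) (set_pmf (offsets_pmf Tr es))"
proof (rule inj_onI)
  fix \<sigma>\<^sub>1 \<sigma>\<^sub>2
  assume "\<sigma>\<^sub>1 \<in> set_pmf (offsets_pmf Tr es)" "\<sigma>\<^sub>2 \<in> set_pmf (offsets_pmf Tr es)"
    and "plain_trace Tr init es \<sigma>\<^sub>1 = plain_trace Tr init es \<sigma>\<^sub>2"
  show "\<sigma>\<^sub>1 = \<sigma>\<^sub>2"
  proof
    fix x
    show "\<sigma>\<^sub>1 x = \<sigma>\<^sub>2 x"
    proof (cases "x \<in> choice_points Tr es")
      case True then show ?thesis using plain_trace_determines_offset \<open>plain_trace _ _ _ _ = _\<close>
        by blast
    next
      case False then show ?thesis using \<open>\<sigma>\<^sub>1 \<in> _\<close> \<open>\<sigma>\<^sub>2 \<in> _\<close>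
        by (simp add: set_pmf_offsets_pmf PiE_dflt_def)
    qed
  qed
qed

theorem lemma1:
  fixes es :: "('l, 'i) event list" and Tr :: "'i set set" and init :: "'l \<Rightarrow> w32"
  assumes "disjoint Tr"
  shows "entropy_bits (trace_pmf Tr init es)
           = 32 * (real (card (choice_class Tr ` arith_instrs es)) + real (card (inputs es)))"
  \<comment> \<open>Disjointness only makes each choice class the trailer set of its members; the
    count itself needs no more than that choice_class is a function.\<close>
  unfolding trace_pmf_def
  by (simp add: entropy_bits_map_pmf_inj[OF inj_on_plain_trace] entropy_bits_offsets_pmf
      card_choice_points)

end
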